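(* Let $(b,c)$ be a connected weighted graph over $X$. The following are equivalent: (i) $(b,c)$ is canonically compactifiable; (ii) $\sup_{x,y\in X}\varrho(x,y)<\infty$; (iii) $\sup_{x,y\in X}r(x,y)<\infty$. If $c\equiv0$, these are moreover equivalent to: (iv) $\sup_{x,y\in X}\sigma(x,y)<\infty$ for every pseudometric $\sigma$ on $X$ that is intrinsic with respect to some measure $m$ on $X$ with $m(X)<\infty$.
   Context: Let $X$ be a countably infinite set. A weighted graph $(b,c)$ over $X$ consists of a symmetric $b:X\times X\to[0,\infty)$ with $b(x,x)=0$ and $\sum_{y}b(x,y)<\infty$ for all $x$, and $c:X\to[0,\infty)$. A path is a finite sequence of pairwise distinct vertices with $b(x_{i-1},x_i)>0$; connected means any two distinct vertices are joined by a path. For $f:X\to\mathbb C$ let $\widetilde Q(f)=\frac12\sum_{x,y}b(x,y)|f(x)-f(y)|^2+\sum_x c(x)|f(x)|^2\in[0,\infty]$ and $\widetilde D=\{f:\widetilde Q(f)<\infty\}$. The graph is called canonically compactifiable if $\widetilde D\subseteq\ell^\infty(X)$, i.e. every function of finite energy is bounded. Define $\varrho(x,y)=\sup\{|f(x)-f(y)|:f\in\widetilde D,\ \widetilde Q(f)\le1\}$, and $r(x,x)=0$, $r(x,y)=\sup\{1/\widetilde Q(g):g\in\widetilde D,\ |g(x)-g(y)|=1\}$ for $x\neq y$. A measure on $X$ is $m:X\to[0,\infty)$ with $m(A)=\sum_{x\in A}m(x)$; a pseudometric $\sigma$ is intrinsic with respect to $m$ if $\frac12\sum_y b(x,y)\sigma(x,y)^2\le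 m(x)$ for all $x$. *)

theory Defs
  imports "HOL-Analysis.Analysis" "HOL-Library.Extended_Nonnegative_Real"
begin

definition weighted_graph :: "('x \<Rightarrow> 'x \<Rightarrow> real) \<Rightarrow> ('x \<Rightarrow> real) \<Rightarrow> bool" where
  "weighted_graph b c \<longleftrightarrow>
     (\<forall>x y. b x y = b y x) \<and> (\<forall>x y. 0 \<le> b x y) \<and> (\<forall>x. b x x = 0) \<and>
     (\<forall>x. (\<lambda>y. b x y) summable_on UNIV) \<and> (\<forall>x. 0 \<le> c x)"

definition is_path :: "('x \<Rightarrow> 'x \<Rightarrow> real) \<Rightarrow> 'x list \<Rightarrow> bool" where
  "is_path b p \<longleftrightarrow> p \<noteq> [] \<and> distinct p \<and>
     (\<forall>i. Suc i < length p \<longrightarrow> b (p ! i) (p ! Suc i) > 0)"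

definition graph_connected :: "('x \<Rightarrow> 'x \<Rightarrow> real) \<Rightarrow> bool" where
  "graph_connected b \<longleftrightarrow>
     (\<forall>x y. x \<noteq> y \<longrightarrow> (\<exists>p. is_path b p \<and> hd p = x \<and> last p = y))"

definition Qt :: "('x \<Rightarrow> 'x \<Rightarrow> real) \<Rightarrow> ('x \<Rightarrow> real) \<Rightarrow> ('x \<Rightarrow> complex) \<Rightarrow> ennreal" where
  "Qt b c f = (1/2) * (\<Sum>\<^sub>\<infinity>(x,y)\<in>UNIV. ennreal (b x y * (cmod (f x - f y))\<^sup>2))
              + (\<Sum>\<^sub>\<infinity>x\<in>UNIV. ennreal (c x * (cmod (f x))\<^sup>2))"

definition Dt :: "('x \<Rightarrow> 'x \<Rightarrow> real) \<Rightarrow> ('x \<Rightarrow> real) \<Rightarrow> ('x \<Rightarrow> complex) set" where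
  "Dt b c = {f. Qt b c f < \<infinity>}"

definition canonically_compactifiable :: "('x \<Rightarrow> 'x \<Rightarrow> real) \<Rightarrow> ('x \<Rightarrow> real) \<Rightarrow> bool" where
  "canonically_compactifiable b c \<longleftrightarrow> (\<forall>f \<in> Dt b c. bounded (range f))"

definition rho :: "('x \<Rightarrow> 'x \<Rightarrow> real) \<Rightarrow> ('x \<Rightarrow> real) \<Rightarrow> 'x \<Rightarrow> 'x \<Rightarrow> ennreal" where
  "rho b c x y = (SUP f \<in> {f \<in> Dt b c. Qt b c f \<le> 1}. ennreal (cmod (f x - f y)))"

definition res :: "('x \<Rightarrow> 'x \<Rightarrow> real) \<Rightarrow> ('x \<Rightarrow> real) \<Rightarrow> 'x \<Rightarrow> 'x \<Rightarrow> ennreal" where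
  "res b c x y = (if x = y then 0
     else (SUP g \<in> {g \<in> Dt b c. cmod (g x - g y) = 1}. 1 / Qt b c g))"

definition pseudometric :: "('x \<Rightarrow> 'x \<Rightarrow> real) \<Rightarrow> bool" where
  "pseudometric \<sigma> \<longleftrightarrow> (\<forall>x y. 0 \<le> \<sigma> x y) \<and> (\<forall>x. \<sigma> x x = 0) \<and>
     (\<forall>x y. \<sigma> x y = \<sigma> y x) \<and> (\<forall>x y z. \<sigma> x z \<le> \<sigma> x y + \<sigma> y z)"

definition is_measure :: "('x \<Rightarrow> real) \<Rightarrow> bool" where
  "is_measure m \<longleftrightarrow> (\<forall>x. 0 \<le> m x)"

definition total_mass :: "('x \<Rightarrow> real) \<Rightarrow> ennreal" where
  "total_mass m = (\<Sum>\<^sub>\<infinity>x\<in>UNIV. ennreal (m x))"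

definition intrinsic :: "('x \<Rightarrow> 'x \<Rightarrow> real) \<Rightarrow> ('x \<Rightarrow> 'x \<Rightarrow> real) \<Rightarrow> ('x \<Rightarrow> real) \<Rightarrow> bool" where
  "intrinsic b \<sigma> m \<longleftrightarrow>
     (\<forall>x. (1/2) * (\<Sum>\<^sub>\<infinity>y\<in>UNIV. ennreal (b x y * (\<sigma> x y)\<^sup>2)) \<le> ennreal (m x))"

end

theory Submission
  imports Defs
begin

text \<open>
  The implications (ii) \<Longrightarrow> (i), (iii) \<Longrightarrow> (i) and (ii) \<Longrightarrow> (iii) are rescaling arguments:
  a function of finite energy rescaled to energy 1 oscillates by at most \<open>sup \<rho>\<close>, and a
  function with \<open>|g x - g y| = 1\<close> rescaled to energy 1 shows \<open>1/Q(g) \<le> (sup \<rho>)\<^sup>2\<close>.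

  For (i) \<Longrightarrow> (ii), suppose \<open>\<rho>\<close> is unbounded and pick \<open>f\<^sub>n\<close> with \<open>Q(f\<^sub>n) \<le> 1\<close> oscillating
  by more than \<open>4\<^sup>n\<close>. Shifting by \<open>f\<^sub>n(z\<^sub>0)\<close> (or, if \<open>c \<noteq> 0\<close>, not shifting but choosing
  \<open>c(z\<^sub>0) > 0\<close>) and taking absolute values gives \<open>h\<^sub>n \<ge> 0\<close> of energy at most 1 that are
  bounded at \<open>z\<^sub>0\<close>, hence, along paths, at every vertex uniformly in \<open>n\<close>. The energy of
  \<open>G = sup\<^sub>n 2\<^sup>-\<^sup>n h\<^sub>n\<close> is at most \<open>\<Sum> 4\<^sup>-\<^sup>n\<close>, so \<open>G\<close> is bounded by (i); but \<open>2\<^sup>-\<^sup>n h\<^sub>n\<close>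
  exceeds \<open>2\<^sup>n/2\<close> somewhere.

  For \<open>c = 0\<close>, the distance \<open>\<sigma>(z\<^sub>0,\<cdot>)\<close> to a base point has energy at most \<open>m(X)\<close>;
  conversely \<open>|f x - f y|\<close> is intrinsic with respect to the measure
  \<open>x \<mapsto> (1/2)\<Sum>\<^sub>y b(x,y)|f x - f y|\<^sup>2\<close>, whose total mass is \<open>Q(f)\<close>.
\<close>

lemma ennreal_summable_on [simp]: "(f::'a \<Rightarrow> ennreal) summable_on A"
  by (rule nonneg_summable_on_complete) simp

lemma infsum_ennreal_eq_SUP:
  "infsum (f::'a \<Rightarrow> ennreal) A = (SUP F\<in>{F. finite F \<and> F \<subseteq> A}. sum f F)"
  by (rule nonneg_infsum_complete) simp

lemma sum_le_infsum_ennreal: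
  assumes "finite F" "F \<subseteq> A"
  shows "sum (f::'a \<Rightarrow> ennreal) F \<le> infsum f A"
  unfolding infsum_ennreal_eq_SUP using assms by (intro SUP_upper) auto

lemma infsum_cmult_right_ennreal:
  "infsum (\<lambda>p. (r::ennreal) * f p) A = r * infsum f A"
  unfolding infsum_ennreal_eq_SUP SUP_mult_left_ennreal sum_distrib_left ..

lemma infsum_le_suminf_ennreal:
  assumes "\<And>p. p \<in> A \<Longrightarrow> (f::'a \<Rightarrow> ennreal) p \<le> (\<Sum>n. g n p)"
  shows "infsum f A \<le> (\<Sum>n. infsum (g n) A)"
  unfolding infsum_ennreal_eq_SUP[of f]
proof (rule SUP_least)
  fix F assume F: "F \<in> {F. finite F \<and> F \<subseteq> A}"
  have "sum f F \<le> sum (\<lambda>p. \<Sum>n. g n p) F"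
    using F assms by (intro sum_mono) auto
  also have "\<dots> = (\<Sum>n. sum (g n) F)"
    by (rule suminf_sum[symmetric]) simp
  also have "\<dots> \<le> (\<Sum>n. infsum (g n) A)"
    using F by (intro suminf_le sum_le_infsum_ennreal) auto
  finally show "sum f F \<le> (\<Sum>n. infsum (g n) A)" .
qed

lemma sum_infsum_eq_infsum_Times_ennreal:
  assumes "finite F"
  shows "(\<Sum>x\<in>F. infsum (\<lambda>y. f (x, y)) B) = infsum (f::'a \<times> 'b \<Rightarrow> ennreal) (F \<times> B)"
  using assms
proof (induction F rule: finite_induct)
  case (insert a F)
  have "infsum f (insert a F \<times> B) = infsum f ({a} \<times> B \<union> F \<times> B)"
    by (metis Sigma_Un_distrib1 insert_is_Un)
  also have "\<dots> = infsum f ({a} \<times> B) + infsum f (F \<times> B)"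
    using insert by (intro infsum_Un_disjoint) auto
  also have "infsum f ({a} \<times> B) = infsum (\<lambda>y. f (a, y)) B"
  proof -
    have "{a} \<times> B = Pair a ` B"
      by auto
    then show ?thesis
      by (simp add: infsum_reindex inj_on_def comp_def)
  qed
  finally show ?case
    using insert by simp
qed simp

lemma infsum_Sigma_ennreal:
  "infsum (f::'a \<times> 'b \<Rightarrow> ennreal) (A \<times> B) = infsum (\<lambda>x. infsum (\<lambda>y. f (x, y)) B) A"
proof (rule antisym)
  show "infsum f (A \<times> B) \<le> infsum (\<lambda>x. infsum (\<lambda>y. f (x, y)) B) A"
    unfolding infsum_ennreal_eq_SUP[of f]
  proof (rule SUP_least)
    fix F assume F: "F \<in> {F. finite F \<and> F \<subseteq> A \<times> B}"
    have "sum f F \<le> sum f (fst ` F \<times> snd ` F)"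
      using F by (intro sum_mono2) force+
    also have "\<dots> = (\<Sum>x\<in>fst ` F. \<Sum>y\<in>snd ` F. f (x, y))"
      by (simp add: sum.cartesian_product)
    also have "\<dots> \<le> (\<Sum>x\<in>fst ` F. infsum (\<lambda>y. f (x, y)) B)"
      using F by (intro sum_mono sum_le_infsum_ennreal) force+
    also have "\<dots> \<le> infsum (\<lambda>x. infsum (\<lambda>y. f (x, y)) B) A"
      using F by (intro sum_le_infsum_ennreal) force+
    finally show "sum f F \<le> infsum (\<lambda>x. infsum (\<lambda>y. f (x, y)) B) A" .
  qed
  show "infsum (\<lambda>x. infsum (\<lambda>y. f (x, y)) B) A \<le> infsum f (A \<times> B)"
    unfolding infsum_ennreal_eq_SUP[of "\<lambda>x. infsum (\<lambda>y. f (x, y)) B"]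
  proof (rule SUP_least)
    fix F assume F: "F \<in> {F. finite F \<and> F \<subseteq> A}"
    then have "(\<Sum>x\<in>F. infsum (\<lambda>y. f (x, y)) B) = infsum f (F \<times> B)"
      by (simp add: sum_infsum_eq_infsum_Times_ennreal)
    also have "\<dots> \<le> infsum f (A \<times> B)"
      using F by (intro infsum_mono_neutral) auto
    finally show "(\<Sum>x\<in>F. infsum (\<lambda>y. f (x, y)) B) \<le> infsum f (A \<times> B)" .
  qed
qed

definition edge_energy :: "('x \<Rightarrow> 'x \<Rightarrow> real) \<Rightarrow> ('x \<Rightarrow> complex) \<Rightarrow> ennreal" where
  "edge_energy b f = (\<Sum>\<^sub>\<infinity>(x,y)\<in>UNIV. ennreal (b x y * (cmod (f x - f y))\<^sup>2))"

definition killing_energy :: "('x \<Rightarrow> real) \<Rightarrow> ('x \<Rightarrow> complex) \<Rightarrow> ennreal" where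
  "killing_energy c f = (\<Sum>\<^sub>\<infinity>x\<in>UNIV. ennreal (c x * (cmod (f x))\<^sup>2))"

lemma Qt_eq_edge_energy_plus_killing_energy:
  "Qt b c f = 1/2 * edge_energy b f + killing_energy c f"
  by (simp add: Qt_def edge_energy_def killing_energy_def)

lemma weighted_graphD:
  assumes "weighted_graph b c"
  shows "b x y = b y x" "0 \<le> b x y" "b x x = 0" "0 \<le> c x"
  using assms unfolding weighted_graph_def by auto

lemma cmod_of_real_mult_diff: "cmod (of_real t * f x - of_real t * f y) = \<bar>t\<bar> * cmod (f x - f y)"
  by (simp add: right_diff_distrib[symmetric] norm_mult)

lemma Qt_of_real_mult:
  assumes wg: "weighted_graph b c"
  shows "Qt b c (\<lambda>x. of_real t * f x) = ennreal (t\<^sup>2) * Qt b c f"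
proof -
  have edge: "ennreal (b x y * (cmod (of_real t * f x - of_real t * f y))\<^sup>2)
     = ennreal (t\<^sup>2) * ennreal (b x y * (cmod (f x - f y))\<^sup>2)" for x y
    using weighted_graphD(2)[OF wg, of x y]
    by (simp add: cmod_of_real_mult_diff ennreal_mult[symmetric] power_mult_distrib algebra_simps)
  have vertex: "ennreal (c x * (cmod (of_real t * f x))\<^sup>2)
     = ennreal (t\<^sup>2) * ennreal (c x * (cmod (f x))\<^sup>2)" for x
    using weighted_graphD(4)[OF wg, of x]
    by (simp add: norm_mult ennreal_mult[symmetric] power_mult_distrib algebra_simps)
  show ?thesis
    unfolding Qt_eq_edge_energy_plus_killing_energy edge_energy_def killing_energy_def
    by (simp add: edge vertex split_def infsum_cmult_right_ennreal algebra_simps)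
qed

lemma Qt_mono:
  assumes "\<And>x y. b x y * (cmod (g x - g y))\<^sup>2 \<le> b x y * (cmod (f x - f y))\<^sup>2"
    and "\<And>x. c x * (cmod (g x))\<^sup>2 \<le> c x * (cmod (f x))\<^sup>2"
  shows "Qt b c g \<le> Qt b c f"
proof -
  have "edge_energy b g \<le> edge_energy b f"
    unfolding edge_energy_def by (rule infsum_mono) (auto intro: ennreal_leI assms)
  moreover have "killing_energy c g \<le> killing_energy c f"
    unfolding killing_energy_def by (rule infsum_mono) (auto intro: ennreal_leI assms)
  ultimately show ?thesis
    unfolding Qt_eq_edge_energy_plus_killing_energy by (intro add_mono mult_left_mono) auto
qed

lemma edge_term_le_Qt:
  assumes wg: "weighted_graph b c" and "p \<noteq> q"
  shows "ennreal (b p q * (cmod (f p - f q))\<^sup>2) \<le> Qt b c f"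
proof -
  define T where "T = ennreal (b p q * (cmod (f p - f q))\<^sup>2)"
  have "T + T = (\<Sum>z\<in>{(p,q),(q,p)}. (\<lambda>(x,y). ennreal (b x y * (cmod (f x - f y))\<^sup>2)) z)"
    using \<open>p \<noteq> q\<close> weighted_graphD(1)[OF wg, of p q] by (simp add: T_def norm_minus_commute)
  also have "\<dots> \<le> edge_energy b f"
    unfolding edge_energy_def by (rule sum_le_infsum_ennreal) auto
  finally have "1/2 * (T + T) \<le> 1/2 * edge_energy b f"
    by (rule mult_left_mono) simp
  moreover have "1/2 * (T + T) = T"
    by (simp add: mult_2[symmetric] mult.assoc[symmetric] ennreal_divide_times)
  ultimately show ?thesis
    unfolding T_def Qt_eq_edge_energy_plus_killing_energy by (metis add_increasing2 zero_le)
qed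

lemma killing_term_le_Qt: "ennreal (c p * (cmod (f p))\<^sup>2) \<le> Qt b c f"
proof -
  have "ennreal (c p * (cmod (f p))\<^sup>2) \<le> killing_energy c f"
    unfolding killing_energy_def
    using sum_le_infsum_ennreal[of "{p}" UNIV "\<lambda>x. ennreal (c x * (cmod (f x))\<^sup>2)"] by simp
  then show ?thesis
    unfolding Qt_eq_edge_energy_plus_killing_energy by (metis add_increasing zero_le)
qed

fun path_weight :: "('x \<Rightarrow> 'x \<Rightarrow> real) \<Rightarrow> 'x list \<Rightarrow> real" where
  "path_weight b (x # y # xs) = 1 / sqrt (b x y) + path_weight b (y # xs)"
| "path_weight b _ = 0"

lemma cmod_diff_le_path_weight:
  assumes wg: "weighted_graph b c" and Q: "Qt b c f \<le> ennreal e" and e: "0 \<le> e"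
  shows "p \<noteq> [] \<Longrightarrow> (\<forall>i. Suc i < length p \<longrightarrow> 0 < b (p ! i) (p ! Suc i))
     \<Longrightarrow> cmod (f (hd p) - f (last p)) \<le> sqrt e * path_weight b p"
proof (induction p rule: induct_list012)
  case (3 x y xs)
  have bxy: "0 < b x y"
    using "3.prems"(2) by (metis length_Cons nth_Cons_0 nth_Cons_Suc zero_less_Suc Suc_less_eq)
  have "\<forall>i. Suc i < length (y # xs) \<longrightarrow> 0 < b ((y # xs) ! i) ((y # xs) ! Suc i)"
    using "3.prems"(2) by (metis Suc_less_eq length_Cons nth_Cons_Suc)
  then have tail: "cmod (f y - f (last (y # xs))) \<le> sqrt e * path_weight b (y # xs)"
    using "3.IH"(2) by simp
  have "x \<noteq> y"
    using bxy weighted_graphD(3)[OF wg] by auto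
  then have "ennreal (b x y * (cmod (f x - f y))\<^sup>2) \<le> ennreal e"
    using edge_term_le_Qt[OF wg] Q order_trans by blast
  then have "(cmod (f x - f y))\<^sup>2 \<le> e / b x y"
    using e bxy by (simp add: field_simps ennreal_le_iff)
  then have "cmod (f x - f y) \<le> sqrt (e / b x y)"
    by (simp add: real_le_rsqrt)
  then have "cmod (f x - f y) \<le> sqrt e * (1 / sqrt (b x y))"
    by (simp add: real_sqrt_divide)
  then have "cmod (f x - f y) + cmod (f y - f (last (y # xs)))
      \<le> sqrt e * (1 / sqrt (b x y) + path_weight b (y # xs))"
    using tail by (simp add: distrib_left)
  moreover have "cmod (f x - f (last (y # xs))) \<le> cmod (f x - f y) + cmod (f y - f (last (y # xs)))"
    using norm_triangle_ineq[of "f x - f y" "f y - f (last (y # xs))"] by simp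
  ultimately show ?case
    by simp
qed auto

lemma connected_cmod_diff_bound:
  assumes wg: "weighted_graph b c" and con: "graph_connected b"
  obtains K where "\<And>f. Qt b c f \<le> 1 \<Longrightarrow> cmod (f z - f w) \<le> K"
proof (cases "z = w")
  case False
  then obtain p where p: "is_path b p" "hd p = z" "last p = w"
    using con unfolding graph_connected_def by blast
  have "cmod (f z - f w) \<le> path_weight b p" if "Qt b c f \<le> 1" for f
    using cmod_diff_le_path_weight[OF wg _ zero_le_one, of f p] that p unfolding is_path_def by simp
  then show ?thesis
    using that by blast
qed (use that in auto)

lemma bounded_range_if_cmod_diff_le:
  assumes "\<And>x y. cmod (f x - f y) \<le> B"
  shows "bounded (range f)"
  unfolding bounded_iff
proof (intro exI ballI)
  fix z assume "z \<in> range f"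
  then obtain x where z: "z = f x"
    by auto
  have "cmod (f x) \<le> cmod (f undefined) + cmod (f x - f undefined)"
    using norm_triangle_ineq[of "f undefined" "f x - f undefined"] by simp
  then show "cmod z \<le> cmod (f undefined) + B"
    using assms[of x undefined] z by simp
qed

lemma DtI: "Qt b c f = ennreal q \<Longrightarrow> f \<in> Dt b c"
  unfolding Dt_def by simp

lemma DtE:
  assumes "f \<in> Dt b c"
  obtains q where "Qt b c f = ennreal q" "0 \<le> q"
  using assms unfolding Dt_def by (cases "Qt b c f" rule: ennreal_cases) auto

lemma cmod_diff_le_rho:
  "f \<in> Dt b c \<Longrightarrow> Qt b c f \<le> 1 \<Longrightarrow> ennreal (cmod (f x - f y)) \<le> rho b c x y"
  unfolding rho_def by (rule SUP_upper) simp

lemma SUP_SUP_less_top_ennrealE: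
  assumes "(SUP x. SUP y. F x y) < (\<infinity>::ennreal)"
  obtains M where "0 \<le> M" "\<And>x y. F x y \<le> ennreal M"
proof -
  obtain M where M: "(SUP x. SUP y. F x y) = ennreal M" "0 \<le> M"
    using assms by (cases "SUP x. SUP y. F x y" rule: ennreal_cases) auto
  have "F x y \<le> ennreal M" for x y
    unfolding M(1)[symmetric] by (meson SUP_upper2 UNIV_I order_refl)
  then show ?thesis
    using M(2) that by blast
qed

lemma canonically_compactifiable_if_rho_bounded:
  assumes wg: "weighted_graph b c" and S: "(SUP x. SUP y. rho b c x y) < \<infinity>"
  shows "canonically_compactifiable b c"
  unfolding canonically_compactifiable_def
proof
  fix f assume "f \<in> Dt b c"
  then obtain q where q: "Qt b c f = ennreal q" "0 \<le> q"
    by (rule DtE)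
  obtain M where M: "0 \<le> M" "\<And>x y. rho b c x y \<le> ennreal M"
    using SUP_SUP_less_top_ennrealE[OF S] by blast
  define t where "t = 1 / sqrt (q + 1)"
  have t: "0 < t" "t\<^sup>2 * q \<le> 1"
    using q by (simp_all add: t_def power_divide)
  have Qg: "Qt b c (\<lambda>x. of_real t * f x) = ennreal (t\<^sup>2 * q)"
    unfolding Qt_of_real_mult[OF wg] q using q by (simp add: ennreal_mult)
  have "cmod (f x - f y) \<le> M / t" for x y
  proof -
    have "ennreal (t * cmod (f x - f y)) \<le> ennreal M"
      using cmod_diff_le_rho[OF DtI[OF Qg], of x y] M(2)[of x y] t Qg
      by (simp add: cmod_of_real_mult_diff)
    then show ?thesis
      using M t by (simp add: ennreal_le_iff field_simps)
  qed
  then show "bounded (range f)"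
    by (rule bounded_range_if_cmod_diff_le)
qed

lemma canonically_compactifiable_if_res_bounded:
  assumes wg: "weighted_graph b c" and S: "(SUP x. SUP y. res b c x y) < \<infinity>"
  shows "canonically_compactifiable b c"
  unfolding canonically_compactifiable_def
proof
  fix f assume "f \<in> Dt b c"
  then obtain q where q: "Qt b c f = ennreal q" "0 \<le> q"
    by (rule DtE)
  obtain R where R: "0 \<le> R" "\<And>x y. res b c x y \<le> ennreal R"
    using SUP_SUP_less_top_ennrealE[OF S] by blast
  have "cmod (f x - f y) \<le> sqrt (R * q)" for x y
  proof (cases "f x = f y")
    case False
    define d where "d = cmod (f x - f y)"
    have d: "0 < d" "x \<noteq> y"
      using False by (auto simp: d_def)
    define g where "g = (\<lambda>z. of_real (1 / d) * f z)"
    have Qg: "Qt b c g = ennreal ((1 / d)\<^sup>2 * q)"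
      unfolding g_def Qt_of_real_mult[OF wg] q using q by (simp add: ennreal_mult)
    have "cmod (g x - g y) = \<bar>1 / d\<bar> * d"
      unfolding g_def cmod_of_real_mult_diff d_def ..
    then have "cmod (g x - g y) = 1"
      using d by simp
    then have "1 / Qt b c g \<le> res b c x y"
      unfolding res_def using d(2) DtI[OF Qg] by (auto intro!: SUP_upper)
    then have le: "1 / ennreal ((1 / d)\<^sup>2 * q) \<le> ennreal R"
      using R(2)[of x y] Qg by simp
    then have "0 < q"
      using q by (cases "q = 0") (auto simp: top_unique)
    then have "1 / ((1 / d)\<^sup>2 * q) \<le> R"
      using le d R divide_ennreal[of 1 "(1 / d)\<^sup>2 * q"] by (simp add: ennreal_le_iff)
    then have "d\<^sup>2 \<le> R * q"
      using \<open>0 < q\<close> d by (simp add: field_simps power_divide)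
    then show ?thesis
      by (simp add: d_def real_le_rsqrt)
  qed (use R q in simp)
  then show "bounded (range f)"
    by (rule bounded_range_if_cmod_diff_le)
qed

lemma res_bounded_if_rho_bounded:
  assumes wg: "weighted_graph b c" and S: "(SUP x. SUP y. rho b c x y) < \<infinity>"
  shows "(SUP x. SUP y. res b c x y) < \<infinity>"
proof -
  obtain M where M: "0 \<le> M" "\<And>x y. rho b c x y \<le> ennreal M"
    using SUP_SUP_less_top_ennrealE[OF S] by blast
  have "1 / Qt b c g \<le> ennreal (M\<^sup>2)" if g: "g \<in> Dt b c" "cmod (g x - g y) = 1" for g x y
  proof -
    obtain q where q: "Qt b c g = ennreal q" "0 \<le> q"
      using g(1) by (rule DtE)
    have scaled: "t \<le> M" if "0 \<le> t" "t\<^sup>2 * q \<le> 1" for t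
    proof -
      have Qtg: "Qt b c (\<lambda>z. of_real t * g z) = ennreal (t\<^sup>2 * q)"
        unfolding Qt_of_real_mult[OF wg] q using q by (simp add: ennreal_mult)
      have "ennreal (cmod (of_real t * g x - of_real t * g y)) \<le> ennreal M"
        using cmod_diff_le_rho[OF DtI[OF Qtg], of x y] M(2)[of x y] that Qtg by simp
      then show ?thesis
        using that M g(2) by (simp add: cmod_of_real_mult_diff ennreal_le_iff)
    qed
    have "0 < q"
      using scaled[of "M + 1"] M q by (cases "q = 0") auto
    then have "1 / sqrt q \<le> M"
      by (intro scaled) (simp_all add: power_divide)
    then have "1 / q \<le> M\<^sup>2"
      using \<open>0 < q\<close> power_mono[of "1 / sqrt q" M 2] by (simp add: power_divide)
    then show ?thesis
      using q \<open>0 < q\<close> divide_ennreal[of 1 q] by (simp add: ennreal_leI)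
  qed
  then have "res b c x y \<le> ennreal (M\<^sup>2)" for x y
    unfolding res_def by (auto intro!: SUP_least)
  then have "(SUP x. SUP y. res b c x y) \<le> ennreal (M\<^sup>2)"
    by (simp add: SUP_le_iff)
  then show ?thesis
    by (simp add: le_less_trans)
qed

lemma pseudometric_diff_bound:
  assumes "pseudometric \<sigma>"
  shows "\<bar>\<sigma> z x - \<sigma> z y\<bar> \<le> \<sigma> x y"
proof -
  have "\<sigma> z x \<le> \<sigma> z y + \<sigma> y x" "\<sigma> z y \<le> \<sigma> z x + \<sigma> x y" "\<sigma> y x = \<sigma> x y"
    using assms unfolding pseudometric_def by blast+
  then show ?thesis
    by linarith
qed

lemma intrinsic_pseudometric_bounded_if_canonically_compactifiable:
  assumes wg: "weighted_graph b c" and c0: "c = (\<lambda>_. 0)" and CC: "canonically_compactifiable b c"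
    and ps: "pseudometric \<sigma>" and "total_mass m < \<infinity>" and intr: "intrinsic b \<sigma> m"
  shows "\<exists>C. \<forall>x y. \<sigma> x y \<le> C"
proof -
  define f where "f = (\<lambda>x. complex_of_real (\<sigma> undefined x))"
  have "edge_energy b f \<le> (\<Sum>\<^sub>\<infinity>(x,y)\<in>UNIV. ennreal (b x y * (\<sigma> x y)\<^sup>2))"
    unfolding edge_energy_def
  proof (rule infsum_mono; clarsimp)
    fix x y
    have "(cmod (f x - f y))\<^sup>2 = \<bar>\<sigma> undefined x - \<sigma> undefined y\<bar>\<^sup>2"
      by (simp add: f_def flip: of_real_diff)
    also have "\<dots> \<le> (\<sigma> x y)\<^sup>2"
      using pseudometric_diff_bound[OF ps] by (intro power_mono) auto
    finally show "ennreal (b x y * (cmod (f x - f y))\<^sup>2) \<le> ennreal (b x y * (\<sigma> x y)\<^sup>2)"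
      using weighted_graphD(2)[OF wg, of x y] by (intro ennreal_leI mult_left_mono) auto
  qed
  also have "\<dots> = (\<Sum>\<^sub>\<infinity>x\<in>UNIV. \<Sum>\<^sub>\<infinity>y\<in>UNIV. ennreal (b x y * (\<sigma> x y)\<^sup>2))"
    using infsum_Sigma_ennreal[of "\<lambda>(x,y). ennreal (b x y * (\<sigma> x y)\<^sup>2)" UNIV UNIV] by simp
  finally have "1/2 * edge_energy b f
      \<le> (\<Sum>\<^sub>\<infinity>x\<in>UNIV. 1/2 * (\<Sum>\<^sub>\<infinity>y\<in>UNIV. ennreal (b x y * (\<sigma> x y)\<^sup>2)))"
    by (simp add: infsum_cmult_right_ennreal mult_left_mono)
  also have "\<dots> \<le> total_mass m"
    using intr unfolding intrinsic_def total_mass_def by (intro infsum_mono) auto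
  finally have "f \<in> Dt b c"
    using \<open>total_mass m < \<infinity>\<close>
    unfolding Dt_def Qt_eq_edge_energy_plus_killing_energy c0 killing_energy_def by simp
  with CC obtain B where B: "\<And>z. z \<in> range f \<Longrightarrow> cmod z \<le> B"
    unfolding canonically_compactifiable_def bounded_iff by blast
  have "\<sigma> undefined x \<le> B" for x
    using B[of "f x"] ps by (simp add: f_def pseudometric_def)
  then have "\<sigma> x y \<le> 2 * B" for x y
    using ps unfolding pseudometric_def by (smt (verit))
  then show ?thesis
    by blast
qed

lemma canonically_compactifiable_if_intrinsic_pseudometrics_bounded:
  assumes c0: "c = (\<lambda>_. 0)"
    and bounded: "\<forall>\<sigma> m. pseudometric \<sigma> \<and> is_measure m \<and> total_mass m < \<infinity> \<and> intrinsic b \<sigma> m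
                 \<longrightarrow> (\<exists>C. \<forall>x y. \<sigma> x y \<le> C)"
  shows "canonically_compactifiable b c"
  unfolding canonically_compactifiable_def
proof
  fix f assume f: "f \<in> Dt b c"
  define \<sigma> where "\<sigma> = (\<lambda>x y. cmod (f x - f y))"
  define I where "I = (\<lambda>x. 1/2 * (\<Sum>\<^sub>\<infinity>y\<in>UNIV. ennreal (b x y * (\<sigma> x y)\<^sup>2)))"
  have "(\<Sum>\<^sub>\<infinity>x\<in>UNIV. I x) = Qt b c f"
    using infsum_Sigma_ennreal[of "\<lambda>(x,y). ennreal (b x y * (\<sigma> x y)\<^sup>2)" UNIV UNIV]
    unfolding I_def Qt_def c0 \<sigma>_def by (simp add: infsum_cmult_right_ennreal)
  then have total: "(\<Sum>\<^sub>\<infinity>x\<in>UNIV. I x) < \<infinity>"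
    using f by (simp add: Dt_def)
  have I_finite: "I x < \<infinity>" for x
    using sum_le_infsum_ennreal[of "{x}" UNIV I] total by simp
  define m where "m = (\<lambda>x. enn2real (I x))"
  have m: "ennreal (m x) = I x" for x
    unfolding m_def using I_finite[of x] by simp
  have "pseudometric \<sigma>"
    unfolding pseudometric_def \<sigma>_def
    by (auto simp: norm_minus_commute intro: norm_diff_triangle_le)
  moreover have "is_measure m" "total_mass m < \<infinity>" "intrinsic b \<sigma> m"
    using total unfolding is_measure_def total_mass_def intrinsic_def m I_def by (simp_all add: m_def)
  ultimately obtain C where "\<And>x y. \<sigma> x y \<le> C"
    using bounded by blast
  then show "bounded (range f)"
    by (intro bounded_range_if_cmod_diff_le) (simp add: \<sigma>_def)
qed

lemma abs_cSUP_diff_le: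
  fixes f g :: "'a \<Rightarrow> real"
  assumes "bdd_above (range f)" "bdd_above (range g)" "\<And>n. \<bar>f n - g n\<bar> \<le> t"
  shows "\<bar>(SUP n. f n) - (SUP n. g n)\<bar> \<le> t"
proof -
  have "(SUP n. f n) \<le> (SUP n. g n) + t"
  proof (rule cSUP_least)
    show "f n \<le> (SUP n. g n) + t" for n
      using assms(3)[of n] cSUP_upper[OF UNIV_I assms(2), of n] by linarith
  qed simp
  moreover have "(SUP n. g n) \<le> (SUP n. f n) + t"
  proof (rule cSUP_least)
    show "g n \<le> (SUP n. f n) + t" for n
      using assms(3)[of n] cSUP_upper[OF UNIV_I assms(1), of n] by linarith
  qed simp
  ultimately show ?thesis
    by linarith
qed

lemma ennreal_mult_square_le_suminf:
  assumes "0 \<le> a" and D: "\<And>t. (\<forall>n. \<bar>d n\<bar> \<le> t) \<Longrightarrow> \<bar>D\<bar> \<le> (t::real)"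
  shows "ennreal (a * D\<^sup>2) \<le> (\<Sum>n. ennreal (a * (d n)\<^sup>2))"
proof (cases "(\<Sum>n. ennreal (a * (d n)\<^sup>2)) = top \<or> a = 0")
  case False
  then obtain T where T: "(\<Sum>n. ennreal (a * (d n)\<^sup>2)) = ennreal T" "0 \<le> T"
    by (cases "\<Sum>n. ennreal (a * (d n)\<^sup>2)" rule: ennreal_cases) auto
  have a: "0 < a"
    using False \<open>0 \<le> a\<close> by simp
  have "ennreal (a * (d n)\<^sup>2) \<le> ennreal T" for n
    unfolding T(1)[symmetric] using sum_le_suminf[of "\<lambda>n. ennreal (a * (d n)\<^sup>2)" "{n}"] by simp
  then have "(d n)\<^sup>2 \<le> T / a" for n
    using a T(2) by (simp add: field_simps)
  then have "\<bar>d n\<bar> \<le> sqrt (T / a)" for n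
    by (simp add: real_le_rsqrt)
  then have "\<bar>D\<bar> \<le> sqrt (T / a)"
    using D by blast
  then have "D\<^sup>2 \<le> T / a"
    using a T(2) by (metis abs_ge_zero power2_abs real_le_rsqrt real_sqrt_ge_0_iff
        divide_nonneg_pos power_mono real_sqrt_pow2)
  then show ?thesis
    unfolding T(1) using a by (simp add: ennreal_leI field_simps)
qed auto

lemma Qt_SUP_le:
  assumes wg: "weighted_graph b c" and nonneg: "\<And>n w. 0 \<le> g n w"
    and bdd: "\<And>w. bdd_above (range (\<lambda>n. g n w))"
  shows "Qt b c (\<lambda>w. of_real (SUP n. g n w)) \<le> (\<Sum>n. Qt b c (\<lambda>w. of_real (g n w)))"
proof -
  define G where "G = (\<lambda>w. SUP n. g n w)"
  have G_nonneg: "0 \<le> G w" for w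
    unfolding G_def using nonneg[of 0 w] cSUP_upper[OF UNIV_I bdd[of w], of 0] by linarith
  have "ennreal (b x y * (G x - G y)\<^sup>2) \<le> (\<Sum>n. ennreal (b x y * (g n x - g n y)\<^sup>2))" for x y
    by (rule ennreal_mult_square_le_suminf[OF weighted_graphD(2)[OF wg]])
      (auto simp: G_def intro: abs_cSUP_diff_le bdd)
  then have E: "edge_energy b (\<lambda>w. of_real (G w)) \<le> (\<Sum>n. edge_energy b (\<lambda>w. of_real (g n w)))"
    unfolding edge_energy_def by (intro infsum_le_suminf_ennreal) (auto simp flip: of_real_diff)
  have "\<bar>G x\<bar> \<le> t" if "\<forall>n. \<bar>g n x\<bar> \<le> t" for x t
    using abs_cSUP_diff_le[of "\<lambda>n. g n x" "\<lambda>_. 0" t] bdd that by (simp add: G_def)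
  then have "ennreal (c x * (G x)\<^sup>2) \<le> (\<Sum>n. ennreal (c x * (g n x)\<^sup>2))" for x
    by (rule ennreal_mult_square_le_suminf[OF weighted_graphD(4)[OF wg]])
  then have C: "killing_energy c (\<lambda>w. of_real (G w)) \<le> (\<Sum>n. killing_energy c (\<lambda>w. of_real (g n w)))"
    unfolding killing_energy_def by (intro infsum_le_suminf_ennreal) auto
  have "Qt b c (\<lambda>w. of_real (G w)) \<le> 1/2 * (\<Sum>n. edge_energy b (\<lambda>w. of_real (g n w)))
      + (\<Sum>n. killing_energy c (\<lambda>w. of_real (g n w)))"
    unfolding Qt_eq_edge_energy_plus_killing_energy using E C by (intro add_mono mult_left_mono) auto
  also have "\<dots> = (\<Sum>n. Qt b c (\<lambda>w. of_real (g n w)))"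
    unfolding Qt_eq_edge_energy_plus_killing_energy ennreal_suminf_cmult[symmetric]
    by (rule suminf_add) auto
  finally show ?thesis
    unfolding G_def .
qed

lemma Qt_cmod_shift_le:
  assumes wg: "weighted_graph b c" and "c = (\<lambda>_. 0) \<or> s = 0"
  shows "Qt b c (\<lambda>w. of_real (cmod (f w - s))) \<le> Qt b c f"
proof (rule Qt_mono)
  fix x y
  have "\<bar>cmod (f x - s) - cmod (f y - s)\<bar> \<le> cmod (f x - f y)"
    using norm_triangle_ineq3[of "f x - s" "f y - s"] by simp
  then have "(cmod (of_real (cmod (f x - s)) - of_real (cmod (f y - s)) :: complex))\<^sup>2
      \<le> (cmod (f x - f y))\<^sup>2"
    using power_mono[OF _ abs_ge_zero, of _ "cmod (f x - f y)" 2] by (simp flip: of_real_diff)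
  then show "b x y * (cmod (of_real (cmod (f x - s)) - of_real (cmod (f y - s))))\<^sup>2
      \<le> b x y * (cmod (f x - f y))\<^sup>2"
    using weighted_graphD(2)[OF wg] by (rule mult_left_mono)
next
  show "c x * (cmod (of_real (cmod (f x - s)) :: complex))\<^sup>2 \<le> c x * (cmod (f x))\<^sup>2" for x
    using assms(2) by auto
qed

text \<open>
  The base point \<open>z\<^sub>0\<close> anchors the normalization: for \<open>c = 0\<close> we subtract \<open>f(z\<^sub>0)\<close>, otherwise
  \<open>c(z\<^sub>0) > 0\<close> bounds \<open>|f(z\<^sub>0)|\<close> already; connectedness propagates the bound to all vertices.
\<close>

lemma energy_ball_normalization:
  assumes wg: "weighted_graph b c" and con: "graph_connected b"
  obtains B :: "'x \<Rightarrow> real" where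
    "\<And>f. Qt b c f \<le> 1 \<Longrightarrow> \<exists>h. (\<forall>w. 0 \<le> h w \<and> h w \<le> B w) \<and> Qt b c (\<lambda>w. of_real (h w)) \<le> 1
        \<and> (\<forall>x y. cmod (f x - f y) \<le> h x + h y)"
proof -
  obtain z0 where z0: "c = (\<lambda>_. 0) \<or> 0 < c z0"
  proof (cases "c = (\<lambda>_. 0)")
    case False
    then obtain z where "c z \<noteq> 0"
      by auto
    with weighted_graphD(4)[OF wg, of z] show ?thesis
      using that[of z] by linarith
  qed (use that in blast)
  define A where "A = (if c = (\<lambda>_. 0) then 0 else sqrt (1 / c z0))"
  have "\<exists>K. \<forall>f. Qt b c f \<le> 1 \<longrightarrow> cmod (f z0 - f w) \<le> K" for w
    by (rule connected_cmod_diff_bound[OF wg con]) blast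
  then have "\<exists>K. \<forall>w f. Qt b c f \<le> 1 \<longrightarrow> cmod (f z0 - f w) \<le> K w"
    by (intro choice allI)
  then obtain K where K: "\<And>w f. Qt b c f \<le> 1 \<Longrightarrow> cmod (f z0 - f w) \<le> K w"
    by blast
  show ?thesis
  proof (rule that[of "\<lambda>w. A + K w"], intro exI conjI allI)
    fix f assume Qf: "Qt b c f \<le> 1"
    define s where "s = (if c = (\<lambda>_. 0) then f z0 else 0)"
    define h where "h = (\<lambda>w. cmod (f w - s))"
    show "0 \<le> h w" for w
      by (simp add: h_def)
    show "cmod (f x - f y) \<le> h x + h y" for x y
      unfolding h_def using norm_triangle_ineq4[of "f x - s" "f y - s"] by simp
    have "Qt b c (\<lambda>w. of_real (h w)) \<le> Qt b c f"
      unfolding h_def by (rule Qt_cmod_shift_le[OF wg]) (simp add: s_def)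
    then show Qh: "Qt b c (\<lambda>w. of_real (h w)) \<le> 1"
      using Qf by simp
    have hz0: "h z0 \<le> A"
    proof (cases "c = (\<lambda>_. 0)")
      case False
      then have "0 < c z0"
        using z0 by blast
      moreover have "ennreal (c z0 * (cmod (f z0))\<^sup>2) \<le> ennreal 1"
        using order_trans[OF killing_term_le_Qt Qf] by simp
      ultimately have "(cmod (f z0))\<^sup>2 \<le> 1 / c z0"
        by (simp add: ennreal_le_iff field_simps)
      then show ?thesis
        using False by (simp add: h_def s_def A_def real_le_rsqrt)
    qed (simp add: h_def s_def A_def)
    show "h w \<le> A + K w" for w
    proof -
      have "\<bar>h z0 - h w\<bar> \<le> K w"
        using K[OF Qh, of w] by (simp flip: of_real_diff)
      then show ?thesis
        using hz0 by linarith
    qed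
  qed
qed

lemma Qt_SUP_geometric_less_top:
  assumes wg: "weighted_graph b c"
    and nonneg: "\<And>n w. 0 \<le> h n w" and bdd: "\<And>w. bdd_above (range (\<lambda>n. (1/2) ^ n * h n w))"
    and energy: "\<And>n. Qt b c (\<lambda>w. of_real (h n w)) \<le> 1"
  shows "Qt b c (\<lambda>w. of_real (SUP n. (1/2) ^ n * h n w)) < \<infinity>"
proof -
  have "Qt b c (\<lambda>w. of_real ((1/2) ^ n * h n w)) \<le> ennreal ((1/4) ^ n)" for n
  proof -
    have "Qt b c (\<lambda>w. of_real ((1/2) ^ n * h n w))
        = ennreal (((1/2) ^ n)\<^sup>2) * Qt b c (\<lambda>w. of_real (h n w))"
      unfolding Qt_of_real_mult[OF wg, symmetric] by simp
    also have "\<dots> \<le> ennreal (((1/2) ^ n)\<^sup>2) * 1"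
      using energy by (rule mult_left_mono) simp
    finally show ?thesis
      by (simp add: power2_eq_square flip: power_mult_distrib)
  qed
  then have "(\<Sum>n. Qt b c (\<lambda>w. of_real ((1/2) ^ n * h n w))) \<le> (\<Sum>n. ennreal ((1/4) ^ n))"
    by (intro suminf_le) auto
  moreover have "(\<Sum>n. ennreal ((1/4::real) ^ n)) < top"
    unfolding less_top[symmetric] by (rule ennreal_suminf_neq_top) (simp_all add: summable_geometric)
  moreover have "Qt b c (\<lambda>w. of_real (SUP n. (1/2) ^ n * h n w))
      \<le> (\<Sum>n. Qt b c (\<lambda>w. of_real ((1/2) ^ n * h n w)))"
    using nonneg by (intro Qt_SUP_le[OF wg _ bdd]) simp
  ultimately show ?thesis
    unfolding infinity_ennreal_def by (meson order.trans order.strict_trans1)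
qed

lemma geometric_bound_if_canonically_compactifiable:
  assumes wg: "weighted_graph b c" and CC: "canonically_compactifiable b c"
    and nonneg: "\<And>n w. 0 \<le> h n w" and bounded: "\<And>n w. h n w \<le> B w"
    and energy: "\<And>n. Qt b c (\<lambda>w. of_real (h n w)) \<le> 1"
  obtains M where "\<And>n w. h n w \<le> 2 ^ n * M"
proof -
  have "(1/2) ^ n * h n w \<le> B w" for n w
    using nonneg[of n w] bounded[of n w] mult_left_le_one_le[of "h n w" "(1/2) ^ n"]
    by (simp add: power_le_one)
  then have bdd: "bdd_above (range (\<lambda>n. (1/2) ^ n * h n w))" for w
    by (rule bdd_aboveI2)
  have "(\<lambda>w. of_real (SUP n. (1/2) ^ n * h n w)) \<in> Dt b c"
    unfolding Dt_def using Qt_SUP_geometric_less_top[OF wg nonneg bdd energy] by simp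
  with CC have "bounded (range (\<lambda>w. of_real (SUP n. (1/2) ^ n * h n w) :: complex))"
    unfolding canonically_compactifiable_def by blast
  then obtain M where M: "\<And>w. cmod (of_real (SUP n. (1/2) ^ n * h n w) :: complex) \<le> M"
    unfolding bounded_iff by blast
  have "h n w \<le> 2 ^ n * M" for n w
  proof -
    have "(1/2) ^ n * h n w \<le> M"
      using cSUP_upper[OF UNIV_I bdd[of w], of n] M[of w] by simp
    then have "2 ^ n * ((1/2) ^ n * h n w) \<le> 2 ^ n * M"
      by (rule mult_left_mono) simp
    moreover have "2 ^ n * ((1/2) ^ n * h n w) = h n w"
      by (simp add: power_one_over)
    ultimately show ?thesis
      by linarith
  qed
  then show ?thesis
    using that by blast
qed

lemma rho_bounded_if_canonically_compactifiable:
  assumes wg: "weighted_graph b c" and con: "graph_connected b"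
    and CC: "canonically_compactifiable b c"
  shows "(SUP x. SUP y. rho b c x y) < \<infinity>"
proof (rule ccontr)
  assume "\<not> (SUP x. SUP y. rho b c x y) < \<infinity>"
  then have unbounded: "(SUP x. SUP y. rho b c x y) = top"
    unfolding infinity_ennreal_def using top.not_eq_extremum by blast
  have "\<exists>f x y. Qt b c f \<le> 1 \<and> 4 ^ n < cmod (f x - f y)" for n :: nat
  proof -
    have "ennreal (4 ^ n) < (SUP x. SUP y. rho b c x y)"
      unfolding unbounded by simp
    then obtain x y where "ennreal (4 ^ n) < rho b c x y"
      by (auto simp: less_SUP_iff)
    then obtain f where "Qt b c f \<le> 1" "ennreal (4 ^ n) < ennreal (cmod (f x - f y))"
      unfolding rho_def by (auto simp: less_SUP_iff)
    then show ?thesis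
      by (auto simp: ennreal_less_iff)
  qed
  then obtain f X Y where f: "\<And>n. Qt b c (f n) \<le> 1" "\<And>n. 4 ^ n < cmod (f n (X n) - f n (Y n))"
    by metis
  obtain B where "\<And>f. Qt b c f \<le> 1 \<Longrightarrow> \<exists>h. (\<forall>w. 0 \<le> h w \<and> h w \<le> B w)
      \<and> Qt b c (\<lambda>w. of_real (h w)) \<le> 1 \<and> (\<forall>x y. cmod (f x - f y) \<le> h x + h y)"
    using energy_ball_normalization[OF wg con] by blast
  then have "\<exists>h. \<forall>n. (\<forall>w. 0 \<le> h n w \<and> h n w \<le> B w) \<and> Qt b c (\<lambda>w. of_real (h n w)) \<le> 1
      \<and> (\<forall>x y. cmod (f n x - f n y) \<le> h n x + h n y)"
    using f(1) by (intro choice) blast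
  then obtain h where h: "\<And>n w. 0 \<le> h n w" "\<And>n w. h n w \<le> B w"
      "\<And>n. Qt b c (\<lambda>w. of_real (h n w)) \<le> 1" "\<And>n x y. cmod (f n x - f n y) \<le> h n x + h n y"
    by blast
  obtain M where M: "\<And>n w. h n w \<le> 2 ^ n * M"
    using geometric_bound_if_canonically_compactifiable[where h = h and B = B, OF wg CC h(1-3)]
    by blast
  define n where "n = nat \<lceil>2 * M\<rceil>"
  have "(2::real) ^ n * 2 ^ n < 2 ^ n * (2 * M)"
    using f(2)[of n] h(4)[of n "X n" "Y n"] M[of n "X n"] M[of n "Y n"]
    by (simp add: power_mult_distrib[symmetric])
  then have "(2::real) ^ n < 2 * M"
    by simp
  moreover have "2 * M \<le> real n"
    unfolding n_def by linarith
  moreover have "real n < 2 ^ n"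
    using less_exp[of n] by (metis of_nat_less_iff of_nat_numeral of_nat_power)
  ultimately show False
    by linarith
qed

theorem mainTheorem7:
  fixes b :: "'x \<Rightarrow> 'x \<Rightarrow> real" and c :: "'x \<Rightarrow> real"
  assumes "countable (UNIV :: 'x set)" and "infinite (UNIV :: 'x set)"
    and "weighted_graph b c" and "graph_connected b"
  shows "(canonically_compactifiable b c \<longleftrightarrow> (SUP x. SUP y. rho b c x y) < \<infinity>)
       \<and> (canonically_compactifiable b c \<longleftrightarrow> (SUP x. SUP y. res b c x y) < \<infinity>)
       \<and> (c = (\<lambda>_. 0) \<longrightarrow>
            (canonically_compactifiable b c \<longleftrightarrow>
              (\<forall>\<sigma> m. pseudometric \<sigma> \<and> is_measure m \<and> total_mass m < \<infinity> \<and> intrinsic b \<sigma> m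
                 \<longrightarrow> (\<exists>C. \<forall>x y. \<sigma> x y \<le> C))))"
proof (intro conjI impI)
  note wg = \<open>weighted_graph b c\<close> and con = \<open>graph_connected b\<close>
  show rho: "canonically_compactifiable b c \<longleftrightarrow> (SUP x. SUP y. rho b c x y) < \<infinity>"
    using canonically_compactifiable_if_rho_bounded[OF wg]
      rho_bounded_if_canonically_compactifiable[OF wg con] by blast
  show "canonically_compactifiable b c \<longleftrightarrow> (SUP x. SUP y. res b c x y) < \<infinity>"
    using rho canonically_compactifiable_if_res_bounded[OF wg] res_bounded_if_rho_bounded[OF wg]
    by blast
  assume "c = (\<lambda>_. 0)"
  then show "canonically_compactifiable b c \<longleftrightarrow>
      (\<forall>\<sigma> m. pseudometric \<sigma> \<and> is_measure m \<and> total_mass m < \<infinity> \<and> intrinsic b \<sigma> m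
         \<longrightarrow> (\<exists>C. \<forall>x y. \<sigma> x y \<le> C))"
    using intrinsic_pseudometric_bounded_if_canonically_compactifiable[OF wg]
      canonically_compactifiable_if_intrinsic_pseudometrics_bounded by blast
qed

end
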